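(* Let $\Delta,\sigma>0$ and $C>1$ be real numbers, $t$ a positive integer, and $M_1,\dots,M_t$ finite sets with $\Delta\le|M_j|\le C\Delta$ for $j\in[t]$, where $\sigma:=\sum_{i,j=1}^t|M_i\cap M_j|$ satisfies $\sigma\le10^{-4}t^2\Delta$. Then there are at least $\frac{t^2\Delta}{16(2C+1)\sigma}$ pairwise disjoint sets $\tilde M_l\subseteq M_{i_l}$ with $|\tilde M_l|\ge\frac{\Delta}{4(2C+1)}$. *)

theory Defs
  imports "HOL-Analysis.Analysis"
begin

end

theory Submission
  imports Defs "HOL-Library.Disjoint_Sets"
begin

text \<open>Call an index low if its overlap degree \<open>d i = (\<Sum>j. |M i \<inter> M j|)\<close> is at most twice
  the mean \<open>\<sigma>/t\<close>; by Markov's inequality at least \<open>t/2\<close> indices are low. List low indices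
  greedily, each meeting the sets listed before it in at most \<open>\<Delta>/2\<close> elements, so that
  removing the earlier sets leaves pairwise disjoint sets of size at least \<open>\<Delta>/2\<close>. For a
  longest such list, of length \<open>K\<close>, every unlisted low index meets the listed sets in more
  than \<open>\<Delta>/2\<close> elements; double counting gives \<open>(t/2 - K) \<Delta>/2 \<le> 2 K \<sigma>/t\<close>, and with
  \<open>t \<Delta> \<le> \<sigma>\<close> this yields \<open>t\<^sup>2 \<Delta> \<le> 10 K \<sigma>\<close>.\<close>

lemma card_Diff_UN_ge:
  assumes "finite A" "finite S"
  shows "real (card (A - (\<Union>m\<in>S. B m))) \<ge> real (card A) - (\<Sum>m\<in>S. real (card (A \<inter> B m)))"
proof -
  have "A \<inter> (\<Union>m\<in>S. B m) = (\<Union>m\<in>S. A \<inter> B m)" by blast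
  then have "card (A \<inter> (\<Union>m\<in>S. B m)) \<le> (\<Sum>m\<in>S. card (A \<inter> B m))"
    using card_UN_le[OF assms(2)] by metis
  then have "real (card (A \<inter> (\<Union>m\<in>S. B m))) \<le> (\<Sum>m\<in>S. real (card (A \<inter> B m)))"
    by (metis of_nat_le_iff of_nat_sum)
  moreover have "card (A \<inter> (\<Union>m\<in>S. B m)) \<le> card A"
    using assms by (intro card_mono) auto
  ultimately show ?thesis
    using card_Diff_subset_Int[of A "\<Union>m\<in>S. B m"] assms by simp
qed

lemma card_disjointed_ge:
  assumes "finite (A l)"
  shows "real (card (disjointed A l)) \<ge> real (card (A l)) - (\<Sum>m<l. real (card (A l \<inter> A m)))"
  using card_Diff_UN_ge[OF assms, of "{..<l}" A] by (simp add: disjointed_def atLeast0LessThan)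

lemma card_gt_mult_le_sum:
  fixes d :: "'i \<Rightarrow> real"
  assumes "finite I" "\<And>i. i \<in> I \<Longrightarrow> 0 \<le> d i"
  shows "real (card {i\<in>I. c < d i}) * c \<le> (\<Sum>i\<in>I. d i)"
proof -
  have "real (card {i\<in>I. c < d i}) * c = (\<Sum>i\<in>{i\<in>I. c < d i}. c)" by simp
  also have "\<dots> \<le> (\<Sum>i\<in>{i\<in>I. c < d i}. d i)" by (intro sum_mono) auto
  also have "\<dots> \<le> (\<Sum>i\<in>I. d i)" using assms by (intro sum_mono2) auto
  finally show ?thesis .
qed

lemma card_le_twice_card_le_twice_mean:
  fixes d :: "'i \<Rightarrow> real"
  assumes "finite I" "\<And>i. i \<in> I \<Longrightarrow> 0 \<le> d i" "0 < (\<Sum>i\<in>I. d i)"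
  shows "real (card I) \<le> 2 * real (card {i\<in>I. d i \<le> 2 * (\<Sum>i\<in>I. d i) / card I})"
proof -
  define S where "S = (\<Sum>i\<in>I. d i)"
  define n where "n = real (card I)"
  have "n > 0" using assms by (auto simp: n_def card_gt_0_iff)
  have "real (card {i\<in>I. 2 * S / n < d i}) * (2 * S / n) \<le> S"
    unfolding S_def using card_gt_mult_le_sum[OF assms(1,2)] .
  then have bad: "2 * real (card {i\<in>I. 2 * S / n < d i}) \<le> n"
    using \<open>n > 0\<close> assms(3) by (simp add: S_def field_simps)
  have "I = {i\<in>I. d i \<le> 2 * S / n} \<union> {i\<in>I. 2 * S / n < d i}" by auto
  then have "card I \<le> card {i\<in>I. d i \<le> 2 * S / n} + card {i\<in>I. 2 * S / n < d i}"
    by (metis card_Un_le)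
  then show ?thesis using bad by (simp add: S_def n_def)
qed

text \<open>A longest sequence of this kind: maximality gives the last conjunct.\<close>

lemma maximal_greedy_sequence:
  fixes w :: "'i \<Rightarrow> 'i \<Rightarrow> real"
  assumes "finite G"
  shows "\<exists>(K::nat) f. inj_on f {..<K} \<and> f ` {..<K} \<subseteq> G
    \<and> (\<forall>l<K. (\<Sum>m<l. w (f l) (f m)) \<le> \<theta>)
    \<and> (\<forall>j\<in>G - f ` {..<K}. \<theta> < (\<Sum>m<K. w j (f m)))"
proof -
  define greedy where "greedy K f \<longleftrightarrow> inj_on f {..<K} \<and> f ` {..<K} \<subseteq> G
    \<and> (\<forall>l<K. (\<Sum>m<l. w (f l) (f m)) \<le> \<theta>)" for K :: nat and f
  have bounded: "K \<le> card G" if "greedy K f" for K f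
    using that card_inj_on_le[of f "{..<K}" G] assms by (simp add: greedy_def)
  have "\<exists>f. greedy 0 f" by (simp add: greedy_def)
  moreover have "\<forall>K. (\<exists>f. greedy K f) \<longrightarrow> K \<le> card G" using bounded by blast
  ultimately have "\<exists>K. (\<exists>f. greedy K f) \<and> (\<forall>K'. (\<exists>f. greedy K' f) \<longrightarrow> K' \<le> K)"
    by (rule Nat.ex_has_greatest_nat)
  then obtain K f where gKf: "greedy K f" and max: "\<And>K' g. greedy K' g \<Longrightarrow> K' \<le> K"
    by blast
  have dense: "\<theta> < (\<Sum>m<K. w j (f m))" if j: "j \<in> G - f ` {..<K}" for j
  proof (rule ccontr)
    assume "\<not> ?thesis"
    then have "greedy (Suc K) (f(K := j))"
      using gKf j by (auto simp: greedy_def lessThan_Suc inj_on_fun_updI less_Suc_eq)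
    then show False using max by fastforce
  qed
  show ?thesis using gKf dense unfolding greedy_def by blast
qed

text \<open>Double counting the weights between the unused indices and the sequence bounds
  the number of unused indices by \<open>K D / \<theta>\<close>.\<close>

lemma greedy_sequence_card_bound:
  fixes w :: "'i \<Rightarrow> 'i \<Rightarrow> real"
  assumes "finite G"
    and nonneg: "\<And>i j. 0 \<le> w i j"
    and sym: "\<And>i j. i \<in> G \<Longrightarrow> j \<in> G \<Longrightarrow> w i j = w j i"
    and degree: "\<And>i. i \<in> G \<Longrightarrow> (\<Sum>j\<in>G. w i j) \<le> D"
  shows "\<exists>K f. f ` {..<K} \<subseteq> G
    \<and> (\<forall>l<K. (\<Sum>m<l. w (f l) (f m)) \<le> \<theta>)
    \<and> real (card G) * \<theta> \<le> real K * (\<theta> + D)"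
proof -
  obtain K :: nat and f where inj: "inj_on f {..<K}" and FG: "f ` {..<K} \<subseteq> G"
    and sparse: "\<forall>l<K. (\<Sum>m<l. w (f l) (f m)) \<le> \<theta>"
    and dense: "\<forall>j\<in>G - f ` {..<K}. \<theta> < (\<Sum>m<K. w j (f m))"
    using maximal_greedy_sequence[OF assms(1)] by blast
  let ?U = "G - f ` {..<K}"
  have "card ?U = card G - K" "K \<le> card G"
    using card_Diff_subset[OF _ FG] card_mono[OF assms(1) FG] card_image[OF inj] by auto
  then have "(real (card G) - real K) * \<theta> = (\<Sum>j\<in>?U. \<theta>)" by simp
  also have "\<dots> \<le> (\<Sum>j\<in>?U. \<Sum>m<K. w j (f m))"
    using dense by (intro sum_mono) (auto intro: less_imp_le)
  also have "\<dots> = (\<Sum>m<K. \<Sum>j\<in>?U. w (f m) j)"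
    using FG sym by (subst sum.swap) (intro sum.cong; auto)
  also have "\<dots> \<le> (\<Sum>m<K. \<Sum>j\<in>G. w (f m) j)"
    using assms(1) nonneg by (intro sum_mono sum_mono2) auto
  also have "\<dots> \<le> (\<Sum>m<K. D)"
    using FG degree by (intro sum_mono) auto
  finally have "real (card G) * \<theta> \<le> real K * (\<theta> + D)" by (simp add: algebra_simps)
  then show ?thesis using FG sparse by blast
qed

lemma large_disjointed_pieces:
  fixes M :: "'i \<Rightarrow> 'a set"
  assumes "finite G"
    and large: "\<And>i. i \<in> G \<Longrightarrow> finite (M i) \<and> \<Delta> \<le> real (card (M i))"
    and degree: "\<And>i. i \<in> G \<Longrightarrow> (\<Sum>j\<in>G. real (card (M i \<inter> M j))) \<le> D"
  shows "\<exists>K f. f ` {..<K} \<subseteq> G \<and> real (card G) * (\<Delta> / 2) \<le> real K * (\<Delta> / 2 + D)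
    \<and> (\<forall>l<K. \<Delta> / 2 \<le> real (card (disjointed (M \<circ> f) l)))"
proof -
  obtain K f where fG: "f ` {..<K} \<subseteq> G"
    and sparse: "\<forall>l<K. (\<Sum>m<l. real (card (M (f l) \<inter> M (f m)))) \<le> \<Delta> / 2"
    and K: "real (card G) * (\<Delta> / 2) \<le> real K * (\<Delta> / 2 + D)"
    using greedy_sequence_card_bound[OF assms(1), of "\<lambda>i j. real (card (M i \<inter> M j))" D "\<Delta> / 2"]
      degree by (auto simp: Int_commute)
  have "\<Delta> / 2 \<le> real (card (disjointed (M \<circ> f) l))" if "l < K" for l
  proof -
    have "\<Delta> / 2 \<le> real (card (M (f l))) - (\<Sum>m<l. real (card (M (f l) \<inter> M (f m))))"
      using sparse large fG that by fastforce
    also have "\<dots> \<le> real (card (disjointed (M \<circ> f) l))"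
      using card_disjointed_ge[of "M \<circ> f" l] large fG that by auto
    finally show ?thesis .
  qed
  then show ?thesis using fG K by blast
qed

lemma large_disjointed_pieces_of_overlapping_family:
  fixes M :: "'i \<Rightarrow> 'a set" and \<Delta> :: real
  assumes "finite I" "I \<noteq> {}" "\<Delta> > 0"
    and large: "\<And>i. i \<in> I \<Longrightarrow> finite (M i) \<and> \<Delta> \<le> real (card (M i))"
  shows "\<exists>K f. f ` {..<K} \<subseteq> I
    \<and> (real (card I))\<^sup>2 * \<Delta> \<le> 10 * real K * (\<Sum>i\<in>I. \<Sum>j\<in>I. real (card (M i \<inter> M j)))
    \<and> (\<forall>l<K. \<Delta> / 2 \<le> real (card (disjointed (M \<circ> f) l)))"
proof -
  define d where "d i = (\<Sum>j\<in>I. real (card (M i \<inter> M j)))" for i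
  define \<sigma> where "\<sigma> = (\<Sum>i\<in>I. d i)"
  define n where "n = real (card I)"
  define G where "G = {i\<in>I. d i \<le> 2 * \<sigma> / n}"
  have n_pos: "n > 0" using assms(1,2) by (simp add: n_def card_gt_0_iff)
  have "\<Delta> \<le> d i" if "i \<in> I" for i
    using large[OF that] member_le_sum[of i I "\<lambda>j. real (card (M i \<inter> M j))"] that assms(1)
    by (simp add: d_def)
  then have n\<Delta>: "n * \<Delta> \<le> \<sigma>" using sum_mono[of I "\<lambda>_. \<Delta>" d] by (simp add: \<sigma>_def n_def)
  have "0 < \<sigma>" using n\<Delta> n_pos assms(3) by (smt (verit) mult_pos_pos)
  then have n_le: "n \<le> 2 * real (card G)"
    using card_le_twice_card_le_twice_mean[of I d] assms(1)
    by (simp add: G_def \<sigma>_def n_def d_def sum_nonneg)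
  have GI: "G \<subseteq> I" by (auto simp: G_def)
  have "(\<Sum>j\<in>G. real (card (M i \<inter> M j))) \<le> 2 * \<sigma> / n" if "i \<in> G" for i
    using that sum_mono2[OF assms(1) GI, of "\<lambda>j. real (card (M i \<inter> M j))"]
    by (force simp: G_def d_def)
  then obtain K f where fG: "f ` {..<K} \<subseteq> G"
    and K: "real (card G) * (\<Delta> / 2) \<le> real K * (\<Delta> / 2 + 2 * \<sigma> / n)"
    and pieces: "\<forall>l<K. \<Delta> / 2 \<le> real (card (disjointed (M \<circ> f) l))"
    using large_disjointed_pieces[OF finite_subset[OF GI assms(1)], of M \<Delta> "2 * \<sigma> / n"] large GI
    by blast
  have "n\<^sup>2 * \<Delta> \<le> 4 * n * (real (card G) * (\<Delta> / 2))"
    using mult_right_mono[OF mult_left_mono[OF n_le, of n], of \<Delta>] n_pos assms(3)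
    by (simp add: power2_eq_square mult_ac)
  also have "\<dots> \<le> 4 * n * (real K * (\<Delta> / 2 + 2 * \<sigma> / n))"
    using K n_pos by (intro mult_left_mono) auto
  also have "\<dots> = real K * (2 * (n * \<Delta>) + 8 * \<sigma>)"
    using n_pos by (simp add: field_simps)
  also have "\<dots> \<le> real K * (10 * \<sigma>)" using n\<Delta> by (intro mult_left_mono) auto
  finally have "n\<^sup>2 * \<Delta> \<le> 10 * real K * \<sigma>" by simp
  then show ?thesis
    using fG GI pieces unfolding n_def \<sigma>_def d_def by blast
qed

theorem lemma14:
  fixes \<Delta> \<sigma> C :: real and t :: nat and M :: "nat \<Rightarrow> 'a set"
  assumes "\<Delta> > 0" and "\<sigma> > 0" and "C > 1" and "t > 0"
    and "\<forall>j\<in>{1..t}. finite (M j)"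
    and "\<forall>j\<in>{1..t}. \<Delta> \<le> real (card (M j)) \<and> real (card (M j)) \<le> C * \<Delta>"
    and "\<sigma> = (\<Sum>i\<in>{1..t}. \<Sum>j\<in>{1..t}. real (card (M i \<inter> M j)))"
    and "\<sigma> \<le> 10 powi (-4) * (real t)\<^sup>2 * \<Delta>"
  shows "\<exists>(k::nat) (Mt :: nat \<Rightarrow> 'a set) (idx :: nat \<Rightarrow> nat).
           real k \<ge> (real t)\<^sup>2 * \<Delta> / (16 * (2 * C + 1) * \<sigma>) \<and>
           (\<forall>l<k. idx l \<in> {1..t} \<and> Mt l \<subseteq> M (idx l)
                  \<and> real (card (Mt l)) \<ge> \<Delta> / (4 * (2 * C + 1))) \<and>
           (\<forall>l<k. \<forall>l'<k. l \<noteq> l' \<longrightarrow> Mt l \<inter> Mt l' = {})"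
proof -
  have "(\<Sum>i\<in>{1..t}. \<Sum>j\<in>{1..t}. real (card (M i \<inter> M j))) = \<sigma>" using assms(7) by simp
  then obtain K f where f: "f ` {..<K} \<subseteq> {1..t}" and K: "(real t)\<^sup>2 * \<Delta> \<le> 10 * real K * \<sigma>"
    and pieces: "\<forall>l<K. \<Delta> / 2 \<le> real (card (disjointed (M \<circ> f) l))"
    using large_disjointed_pieces_of_overlapping_family[of "{1..t}" \<Delta> M] assms(1,4,5,6) by auto
  have "(real t)\<^sup>2 * \<Delta> \<le> real K * (16 * (2 * C + 1) * \<sigma>)"
    using K mult_left_mono[of "10 * \<sigma>" "16 * (2 * C + 1) * \<sigma>" "real K"] assms(2,3) by simp
  then have K_bound: "(real t)\<^sup>2 * \<Delta> / (16 * (2 * C + 1) * \<sigma>) \<le> real K"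
    using assms(2,3) by (simp add: pos_divide_le_eq)
  have small: "\<Delta> / (4 * (2 * C + 1)) \<le> \<Delta> / 2" using assms(1,3) by (intro divide_left_mono) auto
  show ?thesis
  proof (intro exI conjI allI impI)
    fix l assume "l < K"
    then show "f l \<in> {1..t}" using f by auto
    show "disjointed (M \<circ> f) l \<subseteq> M (f l)" using disjointed_subset[of "M \<circ> f" l] by simp
    show "\<Delta> / (4 * (2 * C + 1)) \<le> real (card (disjointed (M \<circ> f) l))"
      using order_trans[OF small] pieces \<open>l < K\<close> by blast
  next
    fix l l' :: nat assume "l \<noteq> l'"
    then show "disjointed (M \<circ> f) l \<inter> disjointed (M \<circ> f) l' = {}"
      using disjoint_family_disjointed[of "M \<circ> f"] by (simp add: disjoint_family_on_def)
  qed (rule K_bound)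
qed

end
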